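(* Let $G\le\mathrm{O}(d)$ be finite, $x,y\in\mathbb{R}^d$, and $T\subseteq[y]$. Consider the statements: (a) $T\supseteq S(x,y)$; (b) $\bigcup_{p\in T}\overline{V_p}\supseteq\overline{V_x}$; (c) for every $z\in\mathbb{R}^d$ there exists $v\in\arg\max_{p\in[z]}\langle p,x\rangle$ such that $T\cap\arg\max_{q\in[y]}\langle q,v\rangle\ne\varnothing$. Then (a)$\Leftrightarrow$(b)$\Rightarrow$(c), and if moreover $x\in P(G)$, then (c)$\Rightarrow$(b).
   Context: For $x\in\mathbb{R}^d$, $[x]:=\{gx:g\in G\}$. The open Voronoi cell $V_x$ is the set of $y\in\mathbb{R}^d$ such that $x$ is the unique maximizer of $\langle p,y\rangle$ over $p\in[x]$, and $\overline{V_x}$ is its closure. $S(x,y):=\{q\in[y]:V_q\cap V_x\ne\varnothing\}$. $P(G):=\{x\in\mathbb{R}^d:\mathrm{stab}_G(x)=\{\mathrm{id}\}\}$. *)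

theory Defs
  imports "HOL-Analysis.Analysis"
begin

definition finite_orth_group :: "(real^'n::finite^'n) set \<Rightarrow> bool" where
  "finite_orth_group G \<longleftrightarrow> finite G \<and> mat 1 \<in> G \<and> (\<forall>g\<in>G. orthogonal_matrix g)
     \<and> (\<forall>g\<in>G. \<forall>h\<in>G. g ** h \<in> G) \<and> (\<forall>g\<in>G. matrix_inv g \<in> G)"

definition orbit :: "(real^'n^'n) set \<Rightarrow> real^'n \<Rightarrow> (real^'n) set" where
  "orbit G x = (\<lambda>g. g *v x) ` G"

definition vcell :: "(real^'n^'n) set \<Rightarrow> real^'n \<Rightarrow> (real^'n) set" where
  "vcell G x = {y. \<forall>p\<in>orbit G x. p \<noteq> x \<longrightarrow> inner p y < inner x y}"

definition Sset :: "(real^'n^'n) set \<Rightarrow> real^'n \<Rightarrow> real^'n \<Rightarrow> (real^'n) set" where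
  "Sset G x y = {q\<in>orbit G y. vcell G q \<inter> vcell G x \<noteq> {}}"

definition principal :: "(real^'n^'n) set \<Rightarrow> (real^'n) set" where
  "principal G = {x. \<forall>g\<in>G. g *v x = x \<longrightarrow> g = mat 1}"

definition argmax_inner :: "(real^'n) set \<Rightarrow> real^'n \<Rightarrow> (real^'n) set" where
  "argmax_inner A w = {p\<in>A. \<forall>p'\<in>A. inner p' w \<le> inner p w}"

end

theory Submission
  imports Defs
begin

text \<open>
  The closed Voronoi cell of a point p of an orbit [y] consists of the w for which p
  maximizes \<open>\<langle>\<cdot>, w\<rangle>\<close> on [y]. Hence an open cell \<open>V\<^sub>q\<close>, q \<in> [y], meets the closed
  cell of no other point of [y], which gives (b) \<Longrightarrow> (a). For (a) \<Longrightarrow> (b), given w in the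
  closure of \<open>V\<^sub>x\<close> choose q in [y] maximizing \<open>\<langle>q, w\<rangle>\<close>, ties broken by maximizing
  \<open>\<langle>q, x\<rangle>\<close>: for small t > 0 the point w + t x lies in the open set \<open>V\<^sub>x\<close> and in the
  closure of \<open>V\<^sub>q\<close>, so \<open>V\<^sub>x\<close> meets \<open>V\<^sub>q\<close>. Since \<open>\<langle>g v, x\<rangle> = \<langle>v, g\<^sup>T x\<rangle>\<close>, every
  maximizer of \<open>\<langle>\<cdot>, x\<rangle>\<close> on an orbit lies in the closure of \<open>V\<^sub>x\<close>, which gives
  (b) \<Longrightarrow> (c). Conversely, if x has trivial stabilizer and w \<in> \<open>V\<^sub>x\<close>, then w itself is
  the only maximizer of \<open>\<langle>\<cdot>, x\<rangle>\<close> on [w], so (c) places \<open>V\<^sub>x\<close> inside the closed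
  union in (b).
\<close>

lemma orthogonal_matrix_inv_eq_transpose:
  fixes g :: "real^'n^'n"
  assumes "orthogonal_matrix g"
  shows "matrix_inv g = transpose g"
proof -
  have "\<exists>g'. g ** g' = mat 1 \<and> g' ** g = mat 1"
    using assms unfolding orthogonal_matrix_def by blast
  then have inv: "matrix_inv g ** g = mat 1"
    unfolding matrix_inv_def by (rule someI2_ex) blast
  have "matrix_inv g = matrix_inv g ** (g ** transpose g)"
    using assms by (simp add: orthogonal_matrix_def)
  also have "\<dots> = transpose g"
    by (simp add: matrix_mul_assoc inv)
  finally show ?thesis .
qed

lemma inner_matrix_vector_mul_transpose:
  fixes g :: "real^'n^'n"
  shows "inner (g *v a) b = inner a (transpose g *v b)"
  by (metis dot_lmul_matrix inner_commute transpose_matrix_vector)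

lemma norm_orthogonal_matrix_vector_mul:
  fixes g :: "real^'n^'n"
  assumes "orthogonal_matrix g"
  shows "norm (g *v a) = norm a"
proof -
  have "inner (g *v a) (g *v a) = inner a a"
    using assms by (simp add: inner_matrix_vector_mul_transpose matrix_vector_mul_assoc
        orthogonal_matrix_def)
  then show ?thesis
    by (simp add: norm_eq_sqrt_inner)
qed

lemma inner_less_inner_self_if_norm_eq:
  fixes p v :: "'a::real_inner"
  assumes "norm p = norm v" "p \<noteq> v"
  shows "inner p v < inner v v"
proof -
  have "0 < inner (p - v) (p - v)"
    using assms(2) by simp
  also have "inner (p - v) (p - v) = inner p p + inner v v - 2 * inner p v"
    by (simp add: inner_diff_left inner_diff_right inner_commute)
  also have "inner p p = inner v v"
    using assms(1) by (metis power2_norm_eq_inner)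
  finally show ?thesis
    by simp
qed

lemma finite_orth_group_orthogonal:
  "finite_orth_group G \<Longrightarrow> g \<in> G \<Longrightarrow> orthogonal_matrix g"
  unfolding finite_orth_group_def by blast

lemma finite_orth_group_transpose:
  "finite_orth_group G \<Longrightarrow> g \<in> G \<Longrightarrow> transpose g \<in> G"
  unfolding finite_orth_group_def by (metis orthogonal_matrix_inv_eq_transpose)

lemma finite_orbit: "finite_orth_group G \<Longrightarrow> finite (orbit G v)"
  unfolding finite_orth_group_def orbit_def by simp

lemma orbit_refl: "finite_orth_group G \<Longrightarrow> v \<in> orbit G v"
  unfolding finite_orth_group_def orbit_def by (metis image_eqI matrix_vector_mul_lid)

lemma norm_orbit: "finite_orth_group G \<Longrightarrow> p \<in> orbit G v \<Longrightarrow> norm p = norm v"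
  unfolding orbit_def
  by (auto simp: norm_orthogonal_matrix_vector_mul finite_orth_group_orthogonal)

lemma matrix_vector_mul_in_orbit:
  assumes "finite_orth_group G" "g \<in> G" "p \<in> orbit G v"
  shows "g *v p \<in> orbit G v"
proof -
  obtain h where "h \<in> G" "p = h *v v"
    using assms(3) unfolding orbit_def by blast
  moreover have "g ** h \<in> G"
    using assms(1,2) \<open>h \<in> G\<close> unfolding finite_orth_group_def by blast
  ultimately show ?thesis
    unfolding orbit_def by (simp add: matrix_vector_mul_assoc)
qed

lemma orbit_eq:
  assumes G: "finite_orth_group G" and "q \<in> orbit G y"
  shows "orbit G q = orbit G y"
proof -
  obtain h where h: "h \<in> G" "q = h *v y"
    using assms(2) unfolding orbit_def by blast
  have "y = transpose h *v q"
    using h finite_orth_group_orthogonal[OF G h(1)]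
    by (simp add: matrix_vector_mul_assoc orthogonal_matrix_def)
  then have "y \<in> orbit G q"
    using matrix_vector_mul_in_orbit[OF G finite_orth_group_transpose[OF G h(1)] orbit_refl[OF G]]
    by simp
  then show ?thesis
    using assms matrix_vector_mul_in_orbit[OF G] unfolding orbit_def by blast
qed

lemma argmax_inner_subset: "argmax_inner A w \<subseteq> A"
  unfolding argmax_inner_def by blast

lemma argmax_inner_nonempty:
  assumes "finite A" "A \<noteq> {}"
  shows "argmax_inner A w \<noteq> {}"
proof -
  let ?m = "Max ((\<lambda>p. inner p w) ` A)"
  have "?m \<in> (\<lambda>p. inner p w) ` A"
    using assms by simp
  then obtain a where "a \<in> A" "inner a w = ?m"
    by auto
  then have "a \<in> argmax_inner A w"
    using assms(1) unfolding argmax_inner_def by auto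
  then show ?thesis
    by blast
qed

lemma open_vcell:
  assumes "finite_orth_group G"
  shows "open (vcell G v)"
proof -
  have "vcell G v = (\<Inter>p\<in>orbit G v - {v}. {w. inner p w < inner v w})"
    unfolding vcell_def by blast
  then show ?thesis
    using finite_orbit[OF assms]
    by (auto intro!: open_INT open_Collect_less continuous_intros)
qed

lemma add_scaleR_in_vcell:
  assumes "finite_orth_group G" "v \<in> argmax_inner (orbit G v) w" "t > 0"
  shows "w + t *\<^sub>R v \<in> vcell G v"
  unfolding vcell_def
proof (intro CollectI ballI impI)
  fix p assume p: "p \<in> orbit G v" "p \<noteq> v"
  have "t * inner p v < t * inner v v"
    using inner_less_inner_self_if_norm_eq[OF norm_orbit[OF assms(1) p(1)] p(2)] assms(3) by simp
  moreover have "inner p w \<le> inner v w"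
    using assms(2) p(1) unfolding argmax_inner_def by blast
  ultimately show "inner p (w + t *\<^sub>R v) < inner v (w + t *\<^sub>R v)"
    by (simp add: inner_add_right)
qed

lemma closure_vcell:
  assumes G: "finite_orth_group G"
  shows "closure (vcell G v) = {w. v \<in> argmax_inner (orbit G v) w}"
proof
  have "{w. v \<in> argmax_inner (orbit G v) w} = (\<Inter>p\<in>orbit G v. {w. inner p w \<le> inner v w})"
    using orbit_refl[OF G] unfolding argmax_inner_def by blast
  then have "closed {w. v \<in> argmax_inner (orbit G v) w}"
    by (auto intro!: closed_INT closed_Collect_le continuous_intros)
  moreover have "vcell G v \<subseteq> {w. v \<in> argmax_inner (orbit G v) w}"
    using orbit_refl[OF G] unfolding vcell_def argmax_inner_def by (auto simp: less_imp_le)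
  ultimately show "closure (vcell G v) \<subseteq> {w. v \<in> argmax_inner (orbit G v) w}"
    by (rule closure_minimal[rotated])
next
  show "{w. v \<in> argmax_inner (orbit G v) w} \<subseteq> closure (vcell G v)"
  proof
    fix w assume "w \<in> {w. v \<in> argmax_inner (orbit G v) w}"
    then have "eventually (\<lambda>t. w + t *\<^sub>R v \<in> vcell G v) (at_right 0)"
      using add_scaleR_in_vcell[OF G] eventually_at_right_less[of 0] by (auto elim: eventually_mono)
    moreover have "((\<lambda>t. w + t *\<^sub>R v) \<longlongrightarrow> w + 0 *\<^sub>R v) (at_right 0)"
      by (intro tendsto_intros)
    ultimately show "w \<in> closure (vcell G v)"
      by (intro Lim_in_closed_set[of _ "\<lambda>t. w + t *\<^sub>R v" "at_right 0"])
        (auto elim: eventually_mono intro: closure_subset[THEN subsetD])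
  qed
qed

lemma mem_closure_vcell_orbit:
  assumes "finite_orth_group G" "p \<in> orbit G y"
  shows "w \<in> closure (vcell G p) \<longleftrightarrow> p \<in> argmax_inner (orbit G y) w"
  using closure_vcell[OF assms(1)] orbit_eq[OF assms] by simp

lemma vcell_Int_closure_vcell_orbit:
  assumes G: "finite_orth_group G" and "p \<in> orbit G y" "q \<in> orbit G y"
    and "vcell G q \<inter> closure (vcell G p) \<noteq> {}"
  shows "p = q"
proof (rule ccontr)
  assume "p \<noteq> q"
  obtain u where u: "u \<in> vcell G q" "u \<in> closure (vcell G p)"
    using assms(4) by blast
  have "inner q u \<le> inner p u"
    using u(2) assms(2,3) unfolding mem_closure_vcell_orbit[OF G assms(2)] argmax_inner_def by blast
  moreover have "inner p u < inner q u"
    using u(1) \<open>p \<noteq> q\<close> assms(2) orbit_eq[OF G assms(3)] unfolding vcell_def by blast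
  ultimately show False
    by linarith
qed

lemma eventually_argmax_inner_add_scaleR:
  assumes "finite A" "q \<in> argmax_inner (argmax_inner A w) x"
  shows "eventually (\<lambda>t. q \<in> argmax_inner A (w + t *\<^sub>R x)) (at_right 0)"
proof -
  have q: "q \<in> argmax_inner A w"
    using assms(2) argmax_inner_subset by blast
  have "eventually (\<lambda>t. inner p (w + t *\<^sub>R x) \<le> inner q (w + t *\<^sub>R x)) (at_right 0)"
    if "p \<in> A" for p
  proof (cases "p \<in> argmax_inner A w")
    case True
    then have "inner p w = inner q w" "inner p x \<le> inner q x"
      using q assms(2) unfolding argmax_inner_def by (auto intro: order.antisym)
    then show ?thesis
      using eventually_at_right_less[of 0]
      by (auto elim!: eventually_mono simp: inner_add_right mult_left_mono)
  next
    case False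
    then have "inner p w < inner q w"
      using q \<open>p \<in> A\<close> unfolding argmax_inner_def by force
    moreover have "((\<lambda>t. inner (q - p) (w + t *\<^sub>R x)) \<longlongrightarrow> inner (q - p) (w + 0 *\<^sub>R x)) (at_right 0)"
      by (intro tendsto_intros)
    ultimately have "eventually (\<lambda>t. 0 < inner (q - p) (w + t *\<^sub>R x)) (at_right 0)"
      by (intro order_tendstoD(1)) (auto simp: inner_diff_left)
    then show ?thesis
      by (auto elim: eventually_mono simp: inner_diff_left)
  qed
  then have "eventually (\<lambda>t. \<forall>p\<in>A. inner p (w + t *\<^sub>R x) \<le> inner q (w + t *\<^sub>R x)) (at_right 0)"
    using assms(1) by (simp add: eventually_ball_finite)
  then show ?thesis
    using q unfolding argmax_inner_def by (auto elim: eventually_mono)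
qed

lemma closure_vcell_subset_Union_Sset:
  assumes G: "finite_orth_group G"
  shows "closure (vcell G x) \<subseteq> (\<Union>q\<in>Sset G x y. closure (vcell G q))"
proof
  fix w assume w: "w \<in> closure (vcell G x)"
  have "finite (argmax_inner (orbit G y) w)" "argmax_inner (orbit G y) w \<noteq> {}"
    using finite_orbit[OF G] orbit_refl[OF G] argmax_inner_nonempty[of "orbit G y" w]
    by (auto intro: finite_subset[OF argmax_inner_subset])
  then obtain q where q: "q \<in> argmax_inner (argmax_inner (orbit G y) w) x"
    using argmax_inner_nonempty by blast
  then have qw: "q \<in> argmax_inner (orbit G y) w" and qy: "q \<in> orbit G y"
    using argmax_inner_subset by blast+
  obtain t where "t > 0" and "q \<in> argmax_inner (orbit G y) (w + t *\<^sub>R x)"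
    using eventually_happens'[OF _ eventually_conj[OF eventually_at_right_less[of 0]
          eventually_argmax_inner_add_scaleR[OF finite_orbit[OF G] q]]]
    by auto
  then have "w + t *\<^sub>R x \<in> vcell G x \<inter> closure (vcell G q)"
    using add_scaleR_in_vcell[OF G] w closure_vcell[OF G] mem_closure_vcell_orbit[OF G qy] by auto
  then have "vcell G q \<inter> vcell G x \<noteq> {}"
    using open_Int_closure_eq_empty[OF open_vcell[OF G]] by blast
  then have "q \<in> Sset G x y"
    using qy unfolding Sset_def by blast
  moreover have "w \<in> closure (vcell G q)"
    using qw mem_closure_vcell_orbit[OF G qy] by blast
  ultimately show "w \<in> (\<Union>q\<in>Sset G x y. closure (vcell G q))"
    by blast
qed

lemma argmax_inner_orbit_subset_closure_vcell:
  assumes G: "finite_orth_group G"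
  shows "argmax_inner (orbit G z) x \<subseteq> closure (vcell G x)"
proof
  fix v assume v: "v \<in> argmax_inner (orbit G z) x"
  have "inner p v \<le> inner x v" if p: "p \<in> orbit G x" for p
  proof -
    obtain g where g: "g \<in> G" "p = g *v x"
      using p unfolding orbit_def by blast
    have "transpose g *v v \<in> orbit G z"
      using matrix_vector_mul_in_orbit[OF G finite_orth_group_transpose[OF G g(1)]] v
        argmax_inner_subset by blast
    then have "inner (transpose g *v v) x \<le> inner v x"
      using v unfolding argmax_inner_def by blast
    moreover have "inner (transpose g *v v) x = inner p v"
      using inner_matrix_vector_mul_transpose[of "transpose g" v x] g(2) by (simp add: inner_commute)
    ultimately show ?thesis
      by (simp add: inner_commute)
  qed
  then show "v \<in> closure (vcell G x)"
    using closure_vcell[OF G] orbit_refl[OF G] unfolding argmax_inner_def by auto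
qed

lemma eq_if_mem_argmax_inner_orbit_principal:
  assumes G: "finite_orth_group G" and "x \<in> principal G" "w \<in> vcell G x"
    and v: "v \<in> argmax_inner (orbit G w) x"
  shows "v = w"
proof -
  obtain h where h: "h \<in> G" "v = h *v w"
    using v unfolding argmax_inner_def orbit_def by blast
  have "transpose h *v x \<in> orbit G x"
    unfolding orbit_def using finite_orth_group_transpose[OF G h(1)] by blast
  moreover have "inner (transpose h *v x) w = inner v x"
    using inner_matrix_vector_mul_transpose[of "transpose h" x w] h(2) by (simp add: inner_commute)
  moreover have "inner w x \<le> inner v x"
    using v orbit_refl[OF G, of w] unfolding argmax_inner_def by blast
  ultimately have "transpose h *v x = x"
    using assms(3) unfolding vcell_def by (force simp: inner_commute)
  then have "transpose h = mat 1"
    using assms(2) finite_orth_group_transpose[OF G h(1)] unfolding principal_def by blast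
  then show ?thesis
    using h(2) by (metis matrix_vector_mul_lid transpose_mat transpose_transpose)
qed

lemma Sset_subset_if_closure_vcell_covered:
  assumes G: "finite_orth_group G" and T: "T \<subseteq> orbit G y"
    and cover: "closure (vcell G x) \<subseteq> (\<Union>p\<in>T. closure (vcell G p))"
  shows "Sset G x y \<subseteq> T"
proof
  fix q assume "q \<in> Sset G x y"
  then obtain u where q: "q \<in> orbit G y" "u \<in> vcell G q" "u \<in> vcell G x"
    unfolding Sset_def by blast
  then obtain p where "p \<in> T" "u \<in> closure (vcell G p)"
    using cover closure_subset by blast
  moreover have "p = q"
    using calculation q T by (intro vcell_Int_closure_vcell_orbit[OF G]) auto
  ultimately show "q \<in> T"
    by simp
qed

lemma argmax_inner_meets_if_closure_vcell_covered:
  assumes G: "finite_orth_group G" and T: "T \<subseteq> orbit G y"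
    and cover: "closure (vcell G x) \<subseteq> (\<Union>p\<in>T. closure (vcell G p))"
  shows "\<exists>v\<in>argmax_inner (orbit G z) x. T \<inter> argmax_inner (orbit G y) v \<noteq> {}"
proof -
  obtain v where v: "v \<in> argmax_inner (orbit G z) x"
    using argmax_inner_nonempty[OF finite_orbit[OF G]] orbit_refl[OF G] by blast
  then obtain p where "p \<in> T" "v \<in> closure (vcell G p)"
    using argmax_inner_orbit_subset_closure_vcell[OF G] cover by blast
  then have "p \<in> T \<inter> argmax_inner (orbit G y) v"
    using mem_closure_vcell_orbit[OF G] T by blast
  then show ?thesis
    using v by blast
qed

lemma closure_vcell_covered_if_argmax_inner_meets:
  assumes G: "finite_orth_group G" and T: "T \<subseteq> orbit G y" and "x \<in> principal G"
    and meets: "\<forall>z. \<exists>v\<in>argmax_inner (orbit G z) x. T \<inter> argmax_inner (orbit G y) v \<noteq> {}"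
  shows "closure (vcell G x) \<subseteq> (\<Union>p\<in>T. closure (vcell G p))"
proof (rule closure_minimal)
  have "finite T"
    using T finite_orbit[OF G] finite_subset by blast
  then show "closed (\<Union>p\<in>T. closure (vcell G p))"
    by blast
  show "vcell G x \<subseteq> (\<Union>p\<in>T. closure (vcell G p))"
  proof
    fix w assume "w \<in> vcell G x"
    then have "T \<inter> argmax_inner (orbit G y) w \<noteq> {}"
      using meets eq_if_mem_argmax_inner_orbit_principal[OF G \<open>x \<in> principal G\<close>] by blast
    then show "w \<in> (\<Union>p\<in>T. closure (vcell G p))"
      using mem_closure_vcell_orbit[OF G] T by blast
  qed
qed

theorem lemma24:
  fixes G :: "(real^'n^'n) set" and x y :: "real^'n" and T :: "(real^'n) set"
  assumes "finite_orth_group G" and "T \<subseteq> orbit G y"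
  defines "a \<equiv> Sset G x y \<subseteq> T"
      and "b \<equiv> closure (vcell G x) \<subseteq> (\<Union>p\<in>T. closure (vcell G p))"
      and "c \<equiv> (\<forall>z. \<exists>v\<in>argmax_inner (orbit G z) x.
                   T \<inter> argmax_inner (orbit G y) v \<noteq> {})"
  shows "(a \<longleftrightarrow> b) \<and> (b \<longrightarrow> c) \<and> (x \<in> principal G \<longrightarrow> (c \<longrightarrow> b))"
proof -
  have "a \<Longrightarrow> b"
    using closure_vcell_subset_Union_Sset[OF assms(1), of x y] unfolding a_def b_def by blast
  moreover have "b \<Longrightarrow> a"
    using Sset_subset_if_closure_vcell_covered[OF assms(1,2)] unfolding a_def b_def .
  moreover have "b \<Longrightarrow> c"
    using argmax_inner_meets_if_closure_vcell_covered[OF assms(1,2)] unfolding b_def c_def by blast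
  moreover have "x \<in> principal G \<Longrightarrow> c \<Longrightarrow> b"
    using closure_vcell_covered_if_argmax_inner_meets[OF assms(1,2)] unfolding b_def c_def .
  ultimately show ?thesis
    by blast
qed

end
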